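(* For every integer $\Delta\ge 3$, there exists a connected graph $G_\Delta$ of order $n$ and maximum degree $\Delta$ such that $F_c(G_\Delta)=\left(\frac{\Delta}{\Delta+1}\right)n+1$.
   Context: Forcing process: given a set of initially colored vertices, at each step a colored vertex with exactly one non-colored neighbor forces (colors) that neighbor. A set $S\subseteq V(G)$ is a forcing set if iterating this process from $S$ eventually colors all vertices; it is a connected forcing set if moreover the induced subgraph $G[S]$ is connected. $F_c(G)$ is the minimum cardinality of a connected forcing set of $G$. *)

theory Defs
  imports Complex_Main
begin

definition simple_graph :: "'a set \<Rightarrow> ('a \<Rightarrow> 'a \<Rightarrow> bool) \<Rightarrow> bool" where
  "simple_graph V E \<longleftrightarrow> finite V \<and> (\<forall>x y. E x y \<longrightarrow> E y x) \<and> (\<forall>x. \<not> E x x)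
     \<and> (\<forall>x y. E x y \<longrightarrow> x \<in> V \<and> y \<in> V)"

definition nbrs :: "'a set \<Rightarrow> ('a \<Rightarrow> 'a \<Rightarrow> bool) \<Rightarrow> 'a \<Rightarrow> 'a set" where
  "nbrs V E v = {u \<in> V. E v u}"

definition degree :: "'a set \<Rightarrow> ('a \<Rightarrow> 'a \<Rightarrow> bool) \<Rightarrow> 'a \<Rightarrow> nat" where
  "degree V E v = card (nbrs V E v)"

definition max_degree :: "'a set \<Rightarrow> ('a \<Rightarrow> 'a \<Rightarrow> bool) \<Rightarrow> nat" where
  "max_degree V E = Max (degree V E ` V)"

definition connected_on :: "('a \<Rightarrow> 'a \<Rightarrow> bool) \<Rightarrow> 'a set \<Rightarrow> bool" where
  "connected_on E S \<longleftrightarrow>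
     (\<forall>u\<in>S. \<forall>v\<in>S. (\<lambda>x y. E x y \<and> x \<in> S \<and> y \<in> S)\<^sup>*\<^sup>* u v)"

inductive_set forced :: "'a set \<Rightarrow> ('a \<Rightarrow> 'a \<Rightarrow> bool) \<Rightarrow> 'a set \<Rightarrow> 'a set"
  for V :: "'a set" and E :: "'a \<Rightarrow> 'a \<Rightarrow> bool" and S :: "'a set" where
  init: "s \<in> S \<Longrightarrow> s \<in> forced V E S"
| force: "u \<in> forced V E S \<Longrightarrow> w \<in> V \<Longrightarrow> E u w \<Longrightarrow>
          (\<forall>x\<in>V. E u x \<longrightarrow> x \<in> forced V E S \<or> x = w) \<Longrightarrow> w \<in> forced V E S"

definition forcing_set :: "'a set \<Rightarrow> ('a \<Rightarrow> 'a \<Rightarrow> bool) \<Rightarrow> 'a set \<Rightarrow> bool" where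
  "forcing_set V E S \<longleftrightarrow> S \<subseteq> V \<and> forced V E S = V"

definition connected_forcing_set :: "'a set \<Rightarrow> ('a \<Rightarrow> 'a \<Rightarrow> bool) \<Rightarrow> 'a set \<Rightarrow> bool" where
  "connected_forcing_set V E S \<longleftrightarrow> forcing_set V E S \<and> connected_on E S"

definition Fc :: "'a set \<Rightarrow> ('a \<Rightarrow> 'a \<Rightarrow> bool) \<Rightarrow> nat" where
  "Fc V E = (LEAST k. \<exists>S. connected_forcing_set V E S \<and> card S = k)"

end

theory Submission
  imports Defs
begin

text \<open>The extremal graph is a double broom: a path on \<open>\<Delta> + 5\<close> vertices with \<open>\<Delta> - 1\<close> pendant
  leaves at each end, so \<open>n = 3\<Delta> + 3\<close>. The leaves at one end are pairwise twins, and two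
  uncolored twins can never be forced, so a forcing set misses at most one leaf per end; in
  particular it contains a leaf at each end, and connectivity then puts the whole path into it.
  Hence \<open>F\<^sub>c \<ge> n - 2\<close>, and omitting one leaf at each end attains this bound.\<close>

lemma forced_subset:
  assumes "S \<subseteq> V"
  shows "forced V E S \<subseteq> V"
proof
  fix w assume "w \<in> forced V E S"
  then show "w \<in> V" using assms by (induction rule: forced.induct) auto
qed

lemma forced_if_only_uncolored_neighbour:
  assumes "u \<in> S" "w \<in> V" "E u w" "\<And>x. x \<in> V \<Longrightarrow> E u x \<Longrightarrow> x \<noteq> w \<Longrightarrow> x \<in> S"
  shows "w \<in> forced V E S"
  using assms by (blast intro: forced.intros)

text \<open>A vertex adjacent to one of two uncolored twins is adjacent to both, so it never has a
  single uncolored neighbour among them.\<close>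
lemma twin_not_forced:
  assumes "x \<noteq> y" "x \<notin> S" "y \<notin> S" "x \<in> V" "y \<in> V" "\<And>u. E u x \<longleftrightarrow> E u y"
  shows "x \<notin> forced V E S"
proof -
  have "w \<noteq> x \<and> w \<noteq> y" if "w \<in> forced V E S" for w
    using that
  proof (induction rule: forced.induct)
    case (force u w)
    then show ?case using assms(1,4,5) assms(6)[of u] by metis
  qed (use assms in auto)
  then show ?thesis by blast
qed

lemma forcing_set_misses_one_twin:
  assumes "forcing_set V E S" "T \<subseteq> V" "finite T"
    and twins: "\<And>x y u. x \<in> T \<Longrightarrow> y \<in> T \<Longrightarrow> E u x \<longleftrightarrow> E u y"
  shows "card (T - S) \<le> 1"
proof -
  have "x = y" if "x \<in> T - S" "y \<in> T - S" for x y
  proof (rule ccontr)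
    assume "x \<noteq> y"
    have "x \<notin> forced V E S"
      by (rule twin_not_forced[of x y]) (use that assms(2) twins \<open>x \<noteq> y\<close> in auto)
    with that assms(1,2) show False unfolding forcing_set_def by auto
  qed
  then show ?thesis using card_le_Suc0_iff_eq[of "T - S"] \<open>finite T\<close> by auto
qed

lemma rtranclp_crossing_step:
  assumes "r\<^sup>*\<^sup>* u v" "P u" "\<not> P v"
  shows "\<exists>x y. r x y \<and> P x \<and> \<not> P y"
  using assms
proof (induction rule: rtranclp_induct)
  case (step y z)
  then show ?case by (cases "P y") auto
qed simp

lemma connected_on_hits_level:
  assumes "connected_on E S" "a \<in> S" "b \<in> S" "f a \<le> i" "i < f b"
    and step: "\<And>x y. E x y \<Longrightarrow> f y \<le> Suc (f x)"
  shows "\<exists>y\<in>S. f y = Suc i"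
proof -
  have "(\<lambda>x y. E x y \<and> x \<in> S \<and> y \<in> S)\<^sup>*\<^sup>* a b"
    using assms(1-3) unfolding connected_on_def by blast
  from rtranclp_crossing_step[OF this, of "\<lambda>z. f z \<le> i"] assms(4,5)
  obtain x y where "E x y" "y \<in> S" "f x \<le> i" "\<not> f y \<le> i" by auto
  with step[of x y] show ?thesis by force
qed

lemma connected_onI_hub:
  assumes sym: "\<And>x y. E x y \<Longrightarrow> E y x"
    and reach: "\<And>v. v \<in> S \<Longrightarrow> (\<lambda>x y. E x y \<and> x \<in> S \<and> y \<in> S)\<^sup>*\<^sup>* c v"
  shows "connected_on E S"
  unfolding connected_on_def
proof (intro ballI)
  let ?r = "\<lambda>x y. E x y \<and> x \<in> S \<and> y \<in> S"
  fix u v assume "u \<in> S" "v \<in> S"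
  have "?r\<inverse>\<inverse> = ?r" using sym by (auto intro!: ext)
  then have "?r\<^sup>*\<^sup>* u c" using rtranclp_converseI[OF reach[OF \<open>u \<in> S\<close>]] by simp
  then show "?r\<^sup>*\<^sup>* u v" using reach[OF \<open>v \<in> S\<close>] by simp
qed

lemma Fc_eqI:
  assumes "connected_forcing_set V E S" "card S = k"
    and "\<And>S. connected_forcing_set V E S \<Longrightarrow> k \<le> card S"
  shows "Fc V E = k"
  unfolding Fc_def using assms by (intro Least_equality) blast+

text \<open>Vertices \<open>0, \<dots>, d + 4\<close> form the path; \<open>d + 5, \<dots>, 2d + 3\<close> are the leaves at \<open>0\<close> and
  \<open>2d + 4, \<dots>, 3d + 2\<close> the leaves at \<open>d + 4\<close>.\<close>
definition dbroom_arc :: "nat \<Rightarrow> nat \<Rightarrow> nat \<Rightarrow> bool" where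
  "dbroom_arc d x y \<longleftrightarrow> (y = Suc x \<and> y < d + 5) \<or> (x = 0 \<and> d + 5 \<le> y \<and> y < 2*d + 4)
      \<or> (x = d + 4 \<and> 2*d + 4 \<le> y \<and> y < 3*d + 3)"

definition dbroom_adj :: "nat \<Rightarrow> nat \<Rightarrow> nat \<Rightarrow> bool" where
  "dbroom_adj d x y \<longleftrightarrow> dbroom_arc d x y \<or> dbroom_arc d y x"

definition dbroom_verts :: "nat \<Rightarrow> nat set" where
  "dbroom_verts d = {..<3*d + 3}"

definition dbroom_level :: "nat \<Rightarrow> nat \<Rightarrow> nat" where
  "dbroom_level d x = (if x < d + 5 then x + 1 else if x < 2*d + 4 then 0 else d + 6)"

lemma dbroom_adj_sym: "dbroom_adj d x y \<Longrightarrow> dbroom_adj d y x"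
  unfolding dbroom_adj_def by auto

lemma simple_graph_dbroom: "d \<ge> 1 \<Longrightarrow> simple_graph (dbroom_verts d) (dbroom_adj d)"
  unfolding simple_graph_def dbroom_verts_def dbroom_adj_def dbroom_arc_def by auto

lemma dbroom_level_step: "dbroom_adj d x y \<Longrightarrow> dbroom_level d y \<le> Suc (dbroom_level d x)"
  unfolding dbroom_adj_def dbroom_arc_def dbroom_level_def by auto

lemma connected_on_dbroom_path_superset:
  assumes "d \<ge> 1" "{..<d + 5} \<subseteq> S" "S \<subseteq> dbroom_verts d"
  shows "connected_on (dbroom_adj d) S"
proof (rule connected_onI_hub[where c = 0])
  let ?r = "\<lambda>x y. dbroom_adj d x y \<and> x \<in> S \<and> y \<in> S"
  have path: "?r\<^sup>*\<^sup>* 0 i" if "i < d + 5" for i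
    using that
  proof (induction i)
    case (Suc i)
    then have "?r i (Suc i)" using assms(2) by (auto simp: dbroom_adj_def dbroom_arc_def)
    with Suc show ?case by (simp add: rtranclp.rtrancl_into_rtrancl)
  qed simp
  fix v assume "v \<in> S"
  then have v: "v < 3*d + 3" using assms(3) by (auto simp: dbroom_verts_def)
  consider "v < d + 5" | "d + 5 \<le> v" "v < 2*d + 4" | "2*d + 4 \<le> v" by linarith
  then show "?r\<^sup>*\<^sup>* 0 v"
  proof cases
    case 2
    then have "?r 0 v" using \<open>v \<in> S\<close> assms(2) by (auto simp: dbroom_adj_def dbroom_arc_def)
    then show ?thesis by blast
  next
    case 3
    then have "?r (d + 4) v" using v \<open>v \<in> S\<close> assms(2) by (auto simp: dbroom_adj_def dbroom_arc_def)
    with path[of "d + 4"] show ?thesis by (simp add: rtranclp.rtrancl_into_rtrancl)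
  qed (rule path)
qed (rule dbroom_adj_sym)

lemma dbroom_connected_forcing_set_card_ge:
  assumes d: "d \<ge> 3" and cfs: "connected_forcing_set (dbroom_verts d) (dbroom_adj d) S"
  shows "3*d + 1 \<le> card S"
proof -
  let ?V = "dbroom_verts d"
  define A where "A = {d + 5..<2*d + 4}"
  define B where "B = {2*d + 4..<3*d + 3}"
  have fs: "forcing_set ?V (dbroom_adj d) S" and conn: "connected_on (dbroom_adj d) S"
    using cfs unfolding connected_forcing_set_def by auto
  have "card (A - S) \<le> 1" "card (B - S) \<le> 1"
    by (rule forcing_set_misses_one_twin[OF fs];
        auto simp: A_def B_def dbroom_verts_def dbroom_adj_def dbroom_arc_def)+
  moreover have "card A = d - 1" "card B = d - 1" by (simp_all add: A_def B_def)
  ultimately have "\<not> A \<subseteq> A - S" "\<not> B \<subseteq> B - S"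
    using d card_mono[of "A - S" A] card_mono[of "B - S" B] by (auto simp: A_def B_def)
  then obtain a b where ab: "a \<in> A" "a \<in> S" "b \<in> B" "b \<in> S" by blast
  have spine: "{..<d + 5} \<subseteq> S"
  proof
    fix i assume "i \<in> {..<d + 5}"
    with ab have "\<exists>y\<in>S. dbroom_level d y = Suc i"
      by (intro connected_on_hits_level[OF conn, of a b] dbroom_level_step)
        (auto simp: A_def B_def dbroom_level_def)
    with \<open>i \<in> {..<d + 5}\<close> show "i \<in> S" by (auto simp: dbroom_level_def split: if_splits)
  qed
  have "?V - S \<subseteq> (A - S) \<union> (B - S)"
    using spine by (auto simp: A_def B_def dbroom_verts_def subset_iff not_less)
  then have "card (?V - S) \<le> card ((A - S) \<union> (B - S))"
    by (rule card_mono[rotated]) (simp add: A_def B_def)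
  also have "\<dots> \<le> card (A - S) + card (B - S)" by (rule card_Un_le)
  also have "\<dots> \<le> 2" using \<open>card (A - S) \<le> 1\<close> \<open>card (B - S) \<le> 1\<close> by simp
  finally have "card (?V - S) \<le> 2" .
  moreover have "S \<subseteq> ?V" using fs by (simp add: forcing_set_def)
  then have "card (?V - S) = 3*d + 3 - card S"
    by (simp add: card_Diff_subset finite_subset dbroom_verts_def)
  ultimately show ?thesis by linarith
qed

lemma dbroom_optimal_connected_forcing_set:
  assumes d: "d \<ge> 3"
  defines "S \<equiv> dbroom_verts d - {d + 5, 2*d + 4}"
  shows "connected_forcing_set (dbroom_verts d) (dbroom_adj d) S" "card S = 3*d + 1"
proof -
  let ?V = "dbroom_verts d"
  have "d + 5 \<in> forced ?V (dbroom_adj d) S"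
    by (rule forced_if_only_uncolored_neighbour[of 0])
      (use d in \<open>auto simp: S_def dbroom_verts_def dbroom_adj_def dbroom_arc_def\<close>)
  moreover have "2*d + 4 \<in> forced ?V (dbroom_adj d) S"
    by (rule forced_if_only_uncolored_neighbour[of "d + 4"])
      (use d in \<open>auto simp: S_def dbroom_verts_def dbroom_adj_def dbroom_arc_def\<close>)
  ultimately have "forced ?V (dbroom_adj d) S = ?V"
    using forced_subset[of S ?V] forced.init[of _ S ?V] by (auto simp: S_def)
  moreover have "connected_on (dbroom_adj d) S"
    by (rule connected_on_dbroom_path_superset) (use d in \<open>auto simp: S_def dbroom_verts_def\<close>)
  ultimately show "connected_forcing_set ?V (dbroom_adj d) S"
    unfolding connected_forcing_set_def forcing_set_def S_def by auto
  show "card S = 3*d + 1"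
    using d by (simp add: S_def card_Diff_subset dbroom_verts_def)
qed

lemma Fc_dbroom: "d \<ge> 3 \<Longrightarrow> Fc (dbroom_verts d) (dbroom_adj d) = 3*d + 1"
  by (rule Fc_eqI[OF dbroom_optimal_connected_forcing_set dbroom_connected_forcing_set_card_ge])

lemma degree_dbroom_le:
  assumes "d \<ge> 3"
  shows "degree (dbroom_verts d) (dbroom_adj d) x \<le> d"
proof -
  define N where "N = (if x = 0 then insert 1 {d + 5..<2*d + 4}
    else if x = d + 4 then insert (d + 3) {2*d + 4..<3*d + 3}
    else if x < d + 5 then {x - 1, x + 1} else if x < 2*d + 4 then {0} else {d + 4})"
  have "nbrs (dbroom_verts d) (dbroom_adj d) x \<subseteq> N"
    by (auto simp: N_def nbrs_def dbroom_adj_def dbroom_arc_def)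
  moreover have "card N \<le> d" using assms by (auto simp: N_def card_insert_le_m1)
  moreover have "finite N" by (simp add: N_def)
  ultimately show ?thesis
    unfolding degree_def using card_mono le_trans by blast
qed

lemma degree_dbroom_0: "d \<ge> 3 \<Longrightarrow> degree (dbroom_verts d) (dbroom_adj d) 0 = d"
proof -
  assume "d \<ge> 3"
  then have "nbrs (dbroom_verts d) (dbroom_adj d) 0 = insert 1 {d + 5..<2*d + 4}"
    by (auto simp: nbrs_def dbroom_adj_def dbroom_arc_def dbroom_verts_def)
  with \<open>d \<ge> 3\<close> show ?thesis by (simp add: degree_def)
qed

lemma max_degree_dbroom:
  assumes "d \<ge> 3"
  shows "max_degree (dbroom_verts d) (dbroom_adj d) = d"
  unfolding max_degree_def
proof (rule Max_eqI)
  show "d \<in> degree (dbroom_verts d) (dbroom_adj d) ` dbroom_verts d"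
    using degree_dbroom_0[OF assms] by (force simp: dbroom_verts_def)
qed (use assms degree_dbroom_le in \<open>auto simp: dbroom_verts_def\<close>)

theorem proposition3:
  fixes \<Delta> :: nat
  assumes "\<Delta> \<ge> 3"
  shows "\<exists>(V :: nat set) E. simple_graph V E \<and> V \<noteq> {} \<and> connected_on E V
           \<and> max_degree V E = \<Delta>
           \<and> real (Fc V E) = (real \<Delta> / (real \<Delta> + 1)) * real (card V) + 1"
proof (intro exI conjI)
  show "simple_graph (dbroom_verts \<Delta>) (dbroom_adj \<Delta>)"
    using assms by (intro simple_graph_dbroom) simp
  show "dbroom_verts \<Delta> \<noteq> {}" by (simp add: dbroom_verts_def lessThan_empty_iff)
  show "connected_on (dbroom_adj \<Delta>) (dbroom_verts \<Delta>)"
    by (rule connected_on_dbroom_path_superset) (use assms in \<open>auto simp: dbroom_verts_def\<close>)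
  show "max_degree (dbroom_verts \<Delta>) (dbroom_adj \<Delta>) = \<Delta>" by (rule max_degree_dbroom[OF assms])
  have "(real \<Delta> / (real \<Delta> + 1)) * real (3*\<Delta> + 3) + 1 = real (3*\<Delta> + 1)"
    by (simp add: field_simps)
  then show "real (Fc (dbroom_verts \<Delta>) (dbroom_adj \<Delta>))
      = (real \<Delta> / (real \<Delta> + 1)) * real (card (dbroom_verts \<Delta>)) + 1"
    using Fc_dbroom[OF assms] by (simp add: dbroom_verts_def)
qed

end
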